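(* Let $\alpha\in(0,1)$, $\theta>-\alpha$, $n\ge1$, $1\le j\le n$, and let $c_1,\dots,c_n\ge0$ be integers with $\sum_{i=1}^n c_i=j$ and $\sum_{i=1}^n i\,c_i=n$ (set $c_i=0$ for $i>n$). Let $m\ge0$ be an integer and, for integers $k\ge1$, define $$\hat U^{\alpha,\theta}_{n+m}(k)=\sum_{i=1}^{k}c_i\binom{m}{k-i}\frac{(\theta+n-i+\alpha)_{m-k+i}\,(i-\alpha)_{k+1-i}}{(\theta+n)_{m+1}}+\frac{\theta+j\alpha}{\theta+n}\binom{m}{k}\frac{(1-\alpha)_k\,(\theta+\alpha+n)_{m-k}}{(\theta+n+1)_m}.$$ Then $$\sum_{k=1}^{m+n}\hat U^{\alpha,\theta}_{n+m}(k)=1-\frac{\theta+j\alpha}{\theta+n}\,\frac{(\theta+\alpha+n)_m}{(\theta+n+1)_m}.$$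
   Context: $(x)_N=x(x+1)\cdots(x+N-1)$ denotes the rising factorial, $(x)_0=1$. Conventions: $\binom{m}{r}=0$ if $r>m$ or $r<0$, and any summand multiplied by such a vanishing binomial coefficient is taken to be $0$ (so the second term vanishes for $k>m$, and the $i$-th summand of the first term vanishes for $k-i>m$). Interpretation: $\hat U^{\alpha,\theta}_{n+m}(k)$ is the Bayesian nonparametric estimator, under a two-parameter Poisson–Dirichlet $(\alpha,\theta)$ prior, of the probability that observation $n+m+1$ is a species observed exactly $k$ times among the first $n+m$ observations, given a basic sample of size $n$ with $j$ distinct species of which $c_i$ are observed exactly $i$ times. *)

theory Defs
  imports "HOL-Analysis.Analysis"
begin

text \<open>Estimator U-hat for the two-parameter Poisson-Dirichlet prior.
  c i is the number of species observed exactly i times in the basic sample.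
  pochhammer is the rising factorial. Natural subtraction in exponents is
  harmless: in the first term i \<le> k so m + i - k is exact; in the second term
  the summand vanishes by (m choose k) = 0 whenever k > m.\<close>

definition U_hat :: "real \<Rightarrow> real \<Rightarrow> nat \<Rightarrow> nat \<Rightarrow> (nat \<Rightarrow> nat) \<Rightarrow> nat \<Rightarrow> nat \<Rightarrow> real" where
  "U_hat \<alpha> \<theta> n j c m k =
     (\<Sum>i=1..k. real (c i) * real (m choose (k - i)) *
        pochhammer (\<theta> + real n - real i + \<alpha>) (m + i - k) * pochhammer (real i - \<alpha>) (k + 1 - i)
        / pochhammer (\<theta> + real n) (m + 1))
   + (\<theta> + real j * \<alpha>) / (\<theta> + real n) * real (m choose k) *
        pochhammer (1 - \<alpha>) k * pochhammer (\<theta> + \<alpha> + real n) (m - k) / pochhammer (\<theta> + real n + 1) m"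

end

theory Submission
  imports Defs
begin

text \<open>Both parts of the estimator are summed over k by the Vandermonde identity for rising
  factorials. Exchanging the order of summation in the first part, the column of species
  observed i times sums to c i (i - \<alpha>) / (\<theta> + n), hence the first part contributes
  (n - j \<alpha>) / (\<theta> + n). The second part is a Vandermonde sum with its k = 0 term missing,
  and that missing term is exactly the subtracted quantity on the right-hand side.\<close>

lemma sum_triangle_swap:
  fixes f :: "nat \<Rightarrow> nat \<Rightarrow> 'a::comm_monoid_add"
  shows "(\<Sum>k=a..b. \<Sum>i=a..k. f i k) = (\<Sum>i=a..b. \<Sum>k=i..b. f i k)"
proof -
  have "(\<Sum>k=a..b. \<Sum>i=a..k. f i k) = (\<Sum>k=a..b. \<Sum>i\<in>{i. i \<in> {a..b} \<and> i \<le> k}. f i k)"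
    by (intro sum.cong) auto
  also have "\<dots> = (\<Sum>i=a..b. \<Sum>k\<in>{k. k \<in> {a..b} \<and> i \<le> k}. f i k)"
    by (rule sum.swap_restrict) auto
  also have "\<dots> = (\<Sum>i=a..b. \<Sum>k=i..b. f i k)"
    by (intro sum.cong) auto
  finally show ?thesis .
qed

lemma pochhammer_binomial_sum_shifted:
  fixes a b :: "'a::comm_ring_1"
  assumes "i + m \<le> K"
  shows "(\<Sum>k=i..K. of_nat (m choose (k - i)) * pochhammer a (m + i - k) * pochhammer b (k + 1 - i))
         = b * pochhammer (a + b + 1) m"
proof -
  have "(\<Sum>k=i..K. of_nat (m choose (k - i)) * pochhammer a (m + i - k) * pochhammer b (k + 1 - i))
      = (\<Sum>k=0+i..m+i. of_nat (m choose (k - i)) * pochhammer a (m + i - k) * pochhammer b (k + 1 - i))"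
    by (rule sum.mono_neutral_right) (use assms in \<open>auto simp: binomial_eq_0\<close>)
  also have "\<dots> = (\<Sum>l\<le>m. of_nat (m choose l) * pochhammer a (m - l) * pochhammer b (Suc l))"
    by (simp only: sum.shift_bounds_cl_nat_ivl atLeast0AtMost) simp
  also have "\<dots> = b * (\<Sum>l\<le>m. of_nat (m choose l) * pochhammer (b + 1) l * pochhammer a (m - l))"
    by (simp add: pochhammer_rec sum_distrib_left mult_ac)
  also have "\<dots> = b * pochhammer (a + b + 1) m"
    using pochhammer_binomial_sum[of "b + 1" a m] by (simp add: add_ac)
  finally show ?thesis .
qed

lemma pochhammer_binomial_sum_from_1:
  fixes a b :: "'a::comm_ring_1"
  assumes "m \<le> K"
  shows "(\<Sum>k=1..K. of_nat (m choose k) * pochhammer a k * pochhammer b (m - k))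
         = pochhammer (a + b) m - pochhammer b m"
proof -
  have "(\<Sum>k=1..K. of_nat (m choose k) * pochhammer a k * pochhammer b (m - k))
      = (\<Sum>k=Suc 0..m. of_nat (m choose k) * pochhammer a k * pochhammer b (m - k))"
    by (rule sum.mono_neutral_right) (use assms in \<open>auto simp: binomial_eq_0\<close>)
  also have "\<dots> = (\<Sum>k\<le>m. of_nat (m choose k) * pochhammer a k * pochhammer b (m - k)) - pochhammer b m"
    by (simp add: sum.atLeast_Suc_atMost atLeast0AtMost[symmetric])
  finally show ?thesis by (simp add: pochhammer_binomial_sum)
qed

lemma U_hat_first_term_sum:
  fixes \<alpha> \<theta> :: real and c :: "nat \<Rightarrow> nat"
  assumes "\<theta> + real n > 0" and "\<And>i. i > n \<Longrightarrow> c i = 0"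
  shows "(\<Sum>k=1..m+n. \<Sum>i=1..k. real (c i) * real (m choose (k - i)) *
            pochhammer (\<theta> + real n - real i + \<alpha>) (m + i - k) * pochhammer (real i - \<alpha>) (k + 1 - i)
            / pochhammer (\<theta> + real n) (m + 1))
         = (\<Sum>i=1..n. real (c i) * (real i - \<alpha>)) / (\<theta> + real n)"
proof -
  define N where "N = \<theta> + real n"
  have "pochhammer (N + 1) m > 0"
    using assms(1) by (intro pochhammer_pos) (simp add: N_def)
  then have column: "(\<Sum>k=i..m+n. real (m choose (k - i)) *
            pochhammer (N - real i + \<alpha>) (m + i - k) * pochhammer (real i - \<alpha>) (k + 1 - i))
          / pochhammer N (m + 1) = (real i - \<alpha>) / N" if "i \<le> n" for i
    using that pochhammer_binomial_sum_shifted[of i m "m + n" "N - real i + \<alpha>" "real i - \<alpha>"]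
    by (simp add: pochhammer_rec)
  have "(\<Sum>k=1..m+n. \<Sum>i=1..k. real (c i) * real (m choose (k - i)) *
            pochhammer (N - real i + \<alpha>) (m + i - k) * pochhammer (real i - \<alpha>) (k + 1 - i)
            / pochhammer N (m + 1))
      = (\<Sum>i=1..m+n. real (c i) * ((\<Sum>k=i..m+n. real (m choose (k - i)) *
            pochhammer (N - real i + \<alpha>) (m + i - k) * pochhammer (real i - \<alpha>) (k + 1 - i))
          / pochhammer N (m + 1)))"
    by (simp add: sum_triangle_swap sum_distrib_left sum_divide_distrib mult_ac)
  also have "\<dots> = (\<Sum>i=1..n. real (c i) * ((\<Sum>k=i..m+n. real (m choose (k - i)) *
            pochhammer (N - real i + \<alpha>) (m + i - k) * pochhammer (real i - \<alpha>) (k + 1 - i))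
          / pochhammer N (m + 1)))"
    by (rule sum.mono_neutral_right) (auto simp: assms(2))
  also have "\<dots> = (\<Sum>i=1..n. real (c i) * ((real i - \<alpha>) / N))"
    by (rule sum.cong[OF refl]) (subst column, auto)
  finally show ?thesis
    by (simp add: N_def sum_divide_distrib)
qed

theorem proposition6:
  fixes \<alpha> \<theta> :: real and n j m :: nat and c :: "nat \<Rightarrow> nat"
  assumes "0 < \<alpha>" "\<alpha> < 1" "\<theta> > - \<alpha>"
    and "1 \<le> n" "1 \<le> j" "j \<le> n"
    and "\<And>i. i > n \<Longrightarrow> c i = 0"
    and "(\<Sum>i=1..n. c i) = j"
    and "(\<Sum>i=1..n. i * c i) = n"
  shows "(\<Sum>k=1..m+n. U_hat \<alpha> \<theta> n j c m k)
         = 1 - (\<theta> + real j * \<alpha>) / (\<theta> + real n) *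
               pochhammer (\<theta> + \<alpha> + real n) m / pochhammer (\<theta> + real n + 1) m"
proof -
  define N where "N = \<theta> + real n"
  have N_pos: "N > 0"
    using assms(2-4) unfolding N_def by linarith
  have "pochhammer (N + 1) m > 0"
    using N_pos by (intro pochhammer_pos) simp
  have "(\<Sum>i=1..n. real (c i) * (real i - \<alpha>)) = real n - real j * \<alpha>"
    using arg_cong[OF assms(8), of real] arg_cong[OF assms(9), of real]
    by (simp add: algebra_simps sum_subtractf flip: sum_distrib_left)
  then have first: "(\<Sum>k=1..m+n. \<Sum>i=1..k. real (c i) * real (m choose (k - i)) *
            pochhammer (\<theta> + real n - real i + \<alpha>) (m + i - k) * pochhammer (real i - \<alpha>) (k + 1 - i)
            / pochhammer (\<theta> + real n) (m + 1)) = (real n - real j * \<alpha>) / N"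
    using U_hat_first_term_sum[where \<theta>=\<theta> and n=n and c=c and \<alpha>=\<alpha> and m=m] N_pos assms(7) by (simp add: N_def)
  have n_minus_j\<alpha>: "real n - real j * \<alpha> = N - (\<theta> + real j * \<alpha>)"
    by (simp add: N_def)
  have second: "(\<Sum>k=1..m+n. real (m choose k) * pochhammer (1 - \<alpha>) k * pochhammer (\<theta> + \<alpha> + real n) (m - k))
      = pochhammer (N + 1) m - pochhammer (N + \<alpha>) m"
    using pochhammer_binomial_sum_from_1[of m "m + n" "1 - \<alpha>" "\<theta> + \<alpha> + real n"]
    by (simp add: N_def add_ac)
  have "(\<Sum>k=1..m+n. U_hat \<alpha> \<theta> n j c m k) = (real n - real j * \<alpha>) / N
      + (\<theta> + real j * \<alpha>) / N / pochhammer (N + 1) m *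
        (\<Sum>k=1..m+n. real (m choose k) * pochhammer (1 - \<alpha>) k * pochhammer (\<theta> + \<alpha> + real n) (m - k))"
    unfolding U_hat_def sum.distrib first sum_distrib_left
    by (intro arg_cong2[where f="(+)"] refl sum.cong) (simp_all add: N_def)
  also have "\<dots> = (real n - real j * \<alpha>) / N
      + (\<theta> + real j * \<alpha>) / N / pochhammer (N + 1) m * (pochhammer (N + 1) m - pochhammer (N + \<alpha>) m)"
    unfolding second ..
  also have "\<dots> = 1 - (\<theta> + real j * \<alpha>) / N * pochhammer (N + \<alpha>) m / pochhammer (N + 1) m"
    using N_pos \<open>pochhammer (N + 1) m > 0\<close> unfolding n_minus_j\<alpha> by (simp add: field_simps)
  finally show ?thesis
    by (simp add: N_def add_ac)
qed

end
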